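(* Let $H=(V,E)$ be a graph and let $\theta\in(\mathbb{S}^1)^V$ be a stable state on $H$ with $\rho_1(\theta)\in[0,1]$. Then for all $0<\gamma<\beta\le\pi/2$, \[e(\mathcal{C}_\beta,\mathcal{C}_\beta)\ \ge\ e(\mathcal{C}_{\pi/2},\mathcal{C}_\beta)\ \ge\ \sin(\beta-\gamma)\, e(\mathcal{C}_\beta,\mathcal{C}_\gamma^c).\]
   Context: For a graph $H$ with adjacency matrix $A$, $\mathcal{E}_H(\theta)=\frac12\sum_{u,v\in V}A_{u,v}(1-\cos(\theta_u-\theta_v))$ for $\theta\in(\mathbb{S}^1)^V$. A stable state is $\theta$ with $\nabla\mathcal{E}_H(\theta)=0$ and $\nabla^2\mathcal{E}_H(\theta)$ positive semidefinite. $\rho_1(\theta)=|V|^{-1}\sum_{v\in V}e^{i\theta_v}$. Viewing $\mathbb{S}^1$ as $(-\pi,\pi]$, $\mathcal{C}_\beta=\{v\in V:|\theta_v|\ge\beta\}$ and $\mathcal{C}_\gamma^c=V\setminus\mathcal{C}_\gamma$. For $X,Y\subseteq V$, $e(X,Y)=\sum_{x\in X,y\in Y}A_{x,y}$. *)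

theory Defs
  imports "HOL-Analysis.Analysis"
begin

definition is_graph_adj :: "('v::finite \<Rightarrow> 'v \<Rightarrow> real) \<Rightarrow> bool" where
  "is_graph_adj A \<longleftrightarrow> (\<forall>u v. A u v = 0 \<or> A u v = 1) \<and> (\<forall>u v. A u v = A v u) \<and> (\<forall>v. A v v = 0)"

text \<open>Kuramoto energy, on lifts of configurations in (S^1)^V to R^V.\<close>
definition energy :: "('v::finite \<Rightarrow> 'v \<Rightarrow> real) \<Rightarrow> real^'v \<Rightarrow> real" where
  "energy A \<theta> = (1/2) * (\<Sum>u\<in>UNIV. \<Sum>v\<in>UNIV. A u v * (1 - cos (\<theta>$u - \<theta>$v)))"

text \<open>Stable state: vanishing gradient and positive semidefinite Hessian
  (h^T Hess h = second derivative of t \<mapsto> E(\<theta> + t h) at 0).\<close>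
definition stable_state :: "('v::finite \<Rightarrow> 'v \<Rightarrow> real) \<Rightarrow> real^'v \<Rightarrow> bool" where
  "stable_state A \<theta> \<longleftrightarrow>
     (energy A has_derivative (\<lambda>h. 0)) (at \<theta>) \<and>
     (\<forall>h::real^'v. deriv (deriv (\<lambda>t. energy A (\<theta> + t *\<^sub>R h))) 0 \<ge> 0)"

definition rho1 :: "real^'v::finite \<Rightarrow> complex" where
  "rho1 \<theta> = (1 / of_nat CARD('v)) * (\<Sum>v\<in>UNIV. cis (\<theta>$v))"

definition Cset :: "real^'v::finite \<Rightarrow> real \<Rightarrow> 'v set" where
  "Cset \<theta> \<beta> = {v. \<bar>\<theta>$v\<bar> \<ge> \<beta>}"

definition edges_between :: "('v \<Rightarrow> 'v \<Rightarrow> real) \<Rightarrow> 'v set \<Rightarrow> 'v set \<Rightarrow> real" where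
  "edges_between A X Y = (\<Sum>x\<in>X. \<Sum>y\<in>Y. A x y)"

end

theory Submission
  imports Defs
begin

(* The first inequality is monotonicity of e in its first argument, since C_{pi/2} is contained
   in C_beta. For the second, split C_beta into the band D = C_beta - C_{pi/2} and C_{pi/2}.
   Testing the first-order condition with the direction that is +1 on [beta, pi/2) and -1 on
   (-pi/2, -beta] and comparing termwise gives sin(beta - gamma) e(D, C_gamma^c) <= e(D, C_{pi/2}).
   Testing both conditions at a single vertex v shows that sum_w A_vw e^(i theta_w), rotated by
   -theta_v, has zero imaginary part and nonnegative real part; hence sum_w A_vw cos theta_w <= 0
   whenever cos theta_v <= 0, and summing this over v in C_{pi/2} gives
   cos gamma e(C_{pi/2}, C_gamma^c) <= e(C_{pi/2}, C_{pi/2}). *)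

lemma axis_one_nth: "axis v (1::real) $ w = of_bool (w = v)"
  by (simp add: axis_def)

lemma double_sum_axis_diff:
  fixes f :: "'v::finite \<Rightarrow> 'v \<Rightarrow> real"
  shows "(\<Sum>u\<in>UNIV. \<Sum>w\<in>UNIV. f u w * (axis v 1 $ u - axis v 1 $ w))
           = (\<Sum>w\<in>UNIV. f v w) - (\<Sum>u\<in>UNIV. f u v)"
proof -
  have "(\<Sum>w\<in>UNIV. f u w * (axis v 1 $ u - axis v 1 $ w))
          = of_bool (u = v) * (\<Sum>w\<in>UNIV. f v w) - f u v" for u
    by (simp add: axis_one_nth right_diff_distrib sum_subtractf)
  then show ?thesis by (simp add: sum_subtractf)
qed

lemma double_sum_axis_diff_sq:
  fixes f :: "'v::finite \<Rightarrow> 'v \<Rightarrow> real"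
  shows "(\<Sum>u\<in>UNIV. \<Sum>w\<in>UNIV. f u w * (axis v 1 $ u - axis v 1 $ w)\<^sup>2)
           = (\<Sum>w\<in>UNIV. f v w) + (\<Sum>u\<in>UNIV. f u v) - 2 * f v v"
proof -
  have idem: "of_bool P * of_bool P = (of_bool P :: real)" for P by simp
  have "(\<Sum>w\<in>UNIV. f u w * (axis v 1 $ u - axis v 1 $ w)\<^sup>2)
          = of_bool (u = v) * ((\<Sum>w\<in>UNIV. f v w) - 2 * f v v) + f u v" for u
    by (cases "u = v")
      (simp_all add: axis_one_nth power2_eq_square algebra_simps sum.distrib sum_subtractf idem)
  then show ?thesis by (simp add: sum.distrib)
qed

lemma energy_line_has_real_derivative:
  fixes A :: "'v::finite \<Rightarrow> 'v \<Rightarrow> real"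
  shows "((\<lambda>t. energy A (\<theta> + t *\<^sub>R h)) has_real_derivative
           1/2 * (\<Sum>u\<in>UNIV. \<Sum>v\<in>UNIV. A u v * sin (\<theta>$u - \<theta>$v + t * (h$u - h$v)) * (h$u - h$v)))
         (at t)"
proof -
  have "energy A (\<theta> + t *\<^sub>R h) =
          1/2 * (\<Sum>u\<in>UNIV. \<Sum>v\<in>UNIV. A u v * (1 - cos (\<theta>$u - \<theta>$v + t * (h$u - h$v))))" for t
    by (simp add: energy_def algebra_simps)
  then show ?thesis
    by (simp only:) (auto intro!: derivative_eq_intros simp: mult_ac)
qed

lemma energy_line_deriv_has_real_derivative:
  fixes A :: "'v::finite \<Rightarrow> 'v \<Rightarrow> real"
  shows "((\<lambda>t. 1/2 * (\<Sum>u\<in>UNIV. \<Sum>v\<in>UNIV. A u v * sin (\<theta>$u - \<theta>$v + t * (h$u - h$v)) * (h$u - h$v)))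
           has_real_derivative
           1/2 * (\<Sum>u\<in>UNIV. \<Sum>v\<in>UNIV. A u v * cos (\<theta>$u - \<theta>$v + t * (h$u - h$v)) * (h$u - h$v)\<^sup>2))
         (at t)"
  by (auto intro!: derivative_eq_intros simp: power2_eq_square mult_ac)

lemma stable_state_first_order:
  fixes A :: "'v::finite \<Rightarrow> 'v \<Rightarrow> real"
  assumes "stable_state A \<theta>"
  shows "(\<Sum>u\<in>UNIV. \<Sum>v\<in>UNIV. A u v * sin (\<theta>$u - \<theta>$v) * (h$u - h$v)) = 0"
proof -
  have line: "((\<lambda>t. \<theta> + t *\<^sub>R h) has_derivative (\<lambda>t. t *\<^sub>R h)) (at 0)"
    by (auto intro!: derivative_eq_intros)
  have "(energy A has_derivative (\<lambda>_. 0)) (at (\<theta> + 0 *\<^sub>R h))"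
    using assms by (simp add: stable_state_def)
  from has_derivative_compose[OF line this]
  have "((\<lambda>t. energy A (\<theta> + t *\<^sub>R h)) has_real_derivative 0) (at 0)"
    by (rule has_derivative_imp_has_field_derivative) simp
  from DERIV_unique[OF this energy_line_has_real_derivative] show ?thesis
    by simp
qed

lemma stable_state_second_order:
  fixes A :: "'v::finite \<Rightarrow> 'v \<Rightarrow> real"
  assumes "stable_state A \<theta>"
  shows "0 \<le> (\<Sum>u\<in>UNIV. \<Sum>v\<in>UNIV. A u v * cos (\<theta>$u - \<theta>$v) * (h$u - h$v)\<^sup>2)"
proof -
  have "deriv (\<lambda>t. energy A (\<theta> + t *\<^sub>R h)) =
          (\<lambda>t. 1/2 * (\<Sum>u\<in>UNIV. \<Sum>v\<in>UNIV. A u v * sin (\<theta>$u - \<theta>$v + t * (h$u - h$v)) * (h$u - h$v)))"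
    using energy_line_has_real_derivative DERIV_imp_deriv by blast
  then have "deriv (deriv (\<lambda>t. energy A (\<theta> + t *\<^sub>R h))) 0 =
               1/2 * (\<Sum>u\<in>UNIV. \<Sum>v\<in>UNIV. A u v * cos (\<theta>$u - \<theta>$v) * (h$u - h$v)\<^sup>2)"
    using DERIV_imp_deriv[OF energy_line_deriv_has_real_derivative, of A \<theta> h 0] by simp
  moreover have "0 \<le> deriv (deriv (\<lambda>t. energy A (\<theta> + t *\<^sub>R h))) 0"
    using assms by (simp add: stable_state_def)
  ultimately show ?thesis
    by simp
qed

lemma stable_state_local_sin_sum:
  fixes A :: "'v::finite \<Rightarrow> 'v \<Rightarrow> real"
  assumes "stable_state A \<theta>" and sym: "\<And>u w. A u w = A w u"
  shows "(\<Sum>w\<in>UNIV. A v w * sin (\<theta>$v - \<theta>$w)) = 0"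
proof -
  have "(\<Sum>u\<in>UNIV. A u v * sin (\<theta>$u - \<theta>$v)) = - (\<Sum>w\<in>UNIV. A v w * sin (\<theta>$v - \<theta>$w))"
  proof -
    have "A u v * sin (\<theta>$u - \<theta>$v) = - (A v u * sin (\<theta>$v - \<theta>$u))" for u
      by (metis minus_diff_eq mult_minus_right sin_minus sym)
    then show ?thesis by (simp add: sum_negf)
  qed
  with stable_state_first_order[OF assms(1), of "axis v 1"] show ?thesis
    by (simp add: double_sum_axis_diff[where f = "\<lambda>u w. A u w * sin (\<theta>$u - \<theta>$w)"])
qed

lemma stable_state_local_cos_sum_nonneg:
  fixes A :: "'v::finite \<Rightarrow> 'v \<Rightarrow> real"
  assumes "stable_state A \<theta>" and sym: "\<And>u w. A u w = A w u" and loopless: "A v v = 0"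
  shows "0 \<le> (\<Sum>w\<in>UNIV. A v w * cos (\<theta>$v - \<theta>$w))"
proof -
  have "(\<Sum>u\<in>UNIV. A u v * cos (\<theta>$u - \<theta>$v)) = (\<Sum>w\<in>UNIV. A v w * cos (\<theta>$v - \<theta>$w))"
  proof -
    have "A u v * cos (\<theta>$u - \<theta>$v) = A v u * cos (\<theta>$v - \<theta>$u)" for u
      by (metis minus_diff_eq cos_minus sym)
    then show ?thesis by simp
  qed
  with stable_state_second_order[OF assms(1), of "axis v 1"] loopless show ?thesis
    by (simp add: double_sum_axis_diff_sq[where f = "\<lambda>u w. A u w * cos (\<theta>$u - \<theta>$w)"])
qed

lemma stable_state_neighbour_cos_sum_nonpos:
  fixes A :: "'v::finite \<Rightarrow> 'v \<Rightarrow> real"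
  assumes "stable_state A \<theta>" "\<And>u w. A u w = A w u" "A v v = 0" "cos (\<theta>$v) \<le> 0"
  shows "(\<Sum>w\<in>UNIV. A v w * cos (\<theta>$w)) \<le> 0"
proof -
  have "A v w * cos (\<theta>$w) =
          cos (\<theta>$v) * (A v w * cos (\<theta>$v - \<theta>$w)) + sin (\<theta>$v) * (A v w * sin (\<theta>$v - \<theta>$w))" for w
    using cos_diff[of "\<theta>$v" "\<theta>$v - \<theta>$w"] by (simp add: algebra_simps)
  then have "(\<Sum>w\<in>UNIV. A v w * cos (\<theta>$w)) =
      cos (\<theta>$v) * (\<Sum>w\<in>UNIV. A v w * cos (\<theta>$v - \<theta>$w))
        + sin (\<theta>$v) * (\<Sum>w\<in>UNIV. A v w * sin (\<theta>$v - \<theta>$w))"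
    by (simp add: sum.distrib sum_distrib_left)
  also have "\<dots> \<le> 0"
    using stable_state_local_sin_sum[OF assms(1,2)] stable_state_local_cos_sum_nonneg[OF assms(1-3)]
      assms(4)
    by (simp add: mult_nonpos_nonneg)
  finally show ?thesis .
qed

lemma mem_Cset [simp]: "v \<in> Cset \<theta> \<beta> \<longleftrightarrow> \<beta> \<le> \<bar>\<theta>$v\<bar>"
  by (simp add: Cset_def)

lemma edges_between_nonneg: "(\<And>x y. 0 \<le> A x y) \<Longrightarrow> 0 \<le> edges_between A X Y"
  by (simp add: edges_between_def sum_nonneg)

lemma edges_between_mono_left:
  fixes A :: "'v::finite \<Rightarrow> 'v \<Rightarrow> real"
  assumes "\<And>x y. 0 \<le> A x y" "X \<subseteq> X'"
  shows "edges_between A X Y \<le> edges_between A X' Y"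
  unfolding edges_between_def using assms by (intro sum_mono2) (auto intro: sum_nonneg)

lemma edges_between_commute:
  assumes "\<And>x y. A x y = A y x"
  shows "edges_between A X Y = edges_between A Y X"
  unfolding edges_between_def by (subst sum.swap) (intro sum.cong refl assms)

lemma edges_between_Un_left:
  fixes A :: "'v::finite \<Rightarrow> 'v \<Rightarrow> real"
  shows "X \<inter> X' = {} \<Longrightarrow> edges_between A (X \<union> X') Y = edges_between A X Y + edges_between A X' Y"
  by (simp add: edges_between_def sum.union_disjoint)

lemma edges_between_Un_right:
  fixes A :: "'v::finite \<Rightarrow> 'v \<Rightarrow> real"
  shows "Y \<inter> Y' = {} \<Longrightarrow> edges_between A X (Y \<union> Y') = edges_between A X Y + edges_between A X Y'"
  by (simp add: edges_between_def sum.union_disjoint sum.distrib)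

lemma edges_between_eq_sum_of_bool:
  fixes A :: "'v::finite \<Rightarrow> 'v \<Rightarrow> real"
  shows "edges_between A X Y = (\<Sum>x\<in>UNIV. \<Sum>y\<in>UNIV. A x y * (of_bool (x \<in> X) * of_bool (y \<in> Y)))"
proof -
  have "(\<Sum>y\<in>UNIV. A x y * (of_bool (x \<in> X) * of_bool (y \<in> Y)))
          = of_bool (x \<in> X) * (\<Sum>y\<in>Y. A x y)" for x
    by (simp add: sum_distrib_left mult_ac)
  then show ?thesis by (simp add: edges_between_def)
qed

lemma sin_le_sin_sym_interval:
  fixes a z :: real
  assumes "0 \<le> a" "a \<le> z" "z \<le> pi - a"
  shows "sin a \<le> sin z"
proof (cases "z \<le> pi/2")
  case True
  then show ?thesis using assms by (intro sin_monotone_2pi_le) auto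
next
  case False
  then have "sin a \<le> sin (pi - z)" using assms by (intro sin_monotone_2pi_le) auto
  then show ?thesis by simp
qed

definition band_sign :: "real \<Rightarrow> real \<Rightarrow> real" where
  "band_sign \<beta> t = (if \<beta> \<le> t \<and> t < pi/2 then 1 else if -(pi/2) < t \<and> t \<le> -\<beta> then -1 else 0)"

lemma abs_band_sign: "0 \<le> \<beta> \<Longrightarrow> \<bar>band_sign \<beta> t\<bar> = of_bool (\<beta> \<le> \<bar>t\<bar> \<and> \<bar>t\<bar> < pi/2)"
  by (auto simp: band_sign_def)

lemma band_sign_eq_0_iff: "0 \<le> \<beta> \<Longrightarrow> band_sign \<beta> t = 0 \<longleftrightarrow> \<not> (\<beta> \<le> \<bar>t\<bar> \<and> \<bar>t\<bar> < pi/2)"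
  using abs_band_sign[of \<beta> t] by auto

lemma sin_diff_lower_bound_outside_band:
  assumes "0 < \<gamma>" "\<gamma> < \<beta>" "\<beta> \<le> t" "t < pi/2" "\<bar>y\<bar> \<le> pi" "\<not> (\<beta> \<le> \<bar>y\<bar> \<and> \<bar>y\<bar> < pi/2)"
  shows "sin (\<beta> - \<gamma>) * of_bool (\<bar>y\<bar> < \<gamma>) - of_bool (pi/2 \<le> \<bar>y\<bar>) \<le> sin (t - y)"
proof -
  consider "pi/2 \<le> \<bar>y\<bar>" | "\<bar>y\<bar> < \<gamma>" | "\<gamma> \<le> \<bar>y\<bar>" "\<bar>y\<bar> < \<beta>"
    using assms by linarith
  then show ?thesis
  proof cases
    case 1
    then show ?thesis using assms by simp
  next
    case 2
    have "sin (\<beta> - \<gamma>) \<le> sin (t - y)"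
      using 2 assms by (intro sin_le_sin_sym_interval) (auto simp: abs_if split: if_splits)
    then show ?thesis using 2 assms by simp
  next
    case 3
    have "0 \<le> sin (t - y)"
      using 3 assms by (intro sin_ge_zero) (auto simp: abs_if split: if_splits)
    then show ?thesis using 3 assms by simp
  qed
qed

lemma sin_diff_band_sign_pair_bound:
  assumes "0 < \<gamma>" "\<gamma> < \<beta>" "\<beta> \<le> pi/2" "\<bar>a\<bar> \<le> pi" "\<bar>b\<bar> \<le> pi"
  shows "\<bar>band_sign \<beta> a\<bar> * (sin (\<beta> - \<gamma>) * of_bool (\<bar>b\<bar> < \<gamma>) - of_bool (pi/2 \<le> \<bar>b\<bar>))
       + \<bar>band_sign \<beta> b\<bar> * (sin (\<beta> - \<gamma>) * of_bool (\<bar>a\<bar> < \<gamma>) - of_bool (pi/2 \<le> \<bar>a\<bar>))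
       \<le> sin (a - b) * (band_sign \<beta> a - band_sign \<beta> b)"
proof -
  define w where "w y = sin (\<beta> - \<gamma>) * of_bool (\<bar>y\<bar> < \<gamma>) - of_bool (pi/2 \<le> \<bar>y\<bar>)" for y
  define band where "band y \<longleftrightarrow> \<beta> \<le> \<bar>y\<bar> \<and> \<bar>y\<bar> < pi/2" for y
  have abs_sign: "\<bar>band_sign \<beta> y\<bar> = of_bool (band y)" for y
    using assms by (simp add: abs_band_sign band_def)
  have sign_outside: "band_sign \<beta> y = 0" if "\<not> band y" for y
    using that assms by (simp add: band_sign_eq_0_iff band_def)
  have w_band: "w y = 0" if "band y" for y
    using that assms by (simp add: w_def band_def)
  have sign_pos: "band_sign \<beta> y = 1" if "band y" "0 \<le> y" for y
    using that by (auto simp: band_def band_sign_def)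
  have sign_neg: "band_sign \<beta> y = -1" if "band y" "y < 0" for y
    using that assms by (auto simp: band_def band_sign_def)
  have sin_flip: "sin (y - x) = - sin (x - y)" for x y
    by (metis minus_diff_eq sin_minus)
  have one_side: "w y \<le> sin (x - y) * band_sign \<beta> x" if "band x" "\<not> band y" "\<bar>y\<bar> \<le> pi" for x y
  proof (cases "0 \<le> x")
    case True
    then show ?thesis
      using sin_diff_lower_bound_outside_band[of \<gamma> \<beta> x y] sign_pos that assms
      by (simp add: w_def band_def)
  next
    case False
    then show ?thesis
      using sin_diff_lower_bound_outside_band[of \<gamma> \<beta> "-x" "-y"] sign_neg sin_flip[of "-y" "-x"]
        that assms
      by (simp add: w_def band_def)
  qed
  have opposite: "0 \<le> sin (x - y)" if "band x" "band y" "0 \<le> x" "y < 0" for x y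
    using that assms by (intro sin_ge_zero) (auto simp: band_def)
  have both: "0 \<le> sin (a - b) * (band_sign \<beta> a - band_sign \<beta> b)" if "band a" "band b"
    using that sign_pos sign_neg opposite[of a b] opposite[of b a] sin_flip[of a b]
    by (cases "0 \<le> a"; cases "0 \<le> b") auto
  show ?thesis
    using one_side[of a b] one_side[of b a] both w_band sign_outside sin_flip[of a b] assms
    unfolding abs_sign w_def[symmetric]
    by (cases "band a"; cases "band b") auto
qed

lemma sum_sum_swap_symmetric:
  assumes "\<And>x y. A x y = A y x"
  shows "(\<Sum>x\<in>X. \<Sum>y\<in>X. A x y * f y x) = (\<Sum>x\<in>X. \<Sum>y\<in>X. A x y * f x y)"
  by (subst sum.swap) (intro sum.cong refl, metis assms)

lemma stable_state_band_estimate: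
  fixes A :: "'v::finite \<Rightarrow> 'v \<Rightarrow> real"
  assumes stable: "stable_state A \<theta>" and sym: "\<And>u w. A u w = A w u" and nonneg: "\<And>u w. 0 \<le> A u w"
    and range: "\<And>v. \<bar>\<theta>$v\<bar> \<le> pi" and "0 < \<gamma>" "\<gamma> < \<beta>" "\<beta> \<le> pi/2"
  shows "sin (\<beta> - \<gamma>) * edges_between A (Cset \<theta> \<beta> - Cset \<theta> (pi/2)) (- Cset \<theta> \<gamma>)
           \<le> edges_between A (Cset \<theta> \<beta> - Cset \<theta> (pi/2)) (Cset \<theta> (pi/2))"
proof -
  define D where "D = Cset \<theta> \<beta> - Cset \<theta> (pi/2)"
  define w where "w y = sin (\<beta> - \<gamma>) * of_bool (y \<in> - Cset \<theta> \<gamma>) - of_bool (y \<in> Cset \<theta> (pi/2))" for y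
  define s :: "real^'v" where "s = (\<chi> v. band_sign \<beta> (\<theta>$v))"
  have D_indicator: "of_bool (x \<in> D) = \<bar>s$x\<bar>" for x
    using assms by (auto simp: D_def s_def abs_band_sign)
  have pair: "A x y * (of_bool (x \<in> D) * w y + of_bool (y \<in> D) * w x)
                \<le> A x y * sin (\<theta>$x - \<theta>$y) * (s$x - s$y)" for x y
    using sin_diff_band_sign_pair_bound[of \<gamma> \<beta> "\<theta>$x" "\<theta>$y"] range[of x] range[of y] assms
    unfolding D_indicator mult.assoc
    by (intro mult_left_mono nonneg) (simp_all add: w_def s_def not_le)
  have "2 * (\<Sum>x\<in>UNIV. \<Sum>y\<in>UNIV. A x y * (of_bool (x \<in> D) * w y))
          = (\<Sum>x\<in>UNIV. \<Sum>y\<in>UNIV. A x y * (of_bool (x \<in> D) * w y + of_bool (y \<in> D) * w x))"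
    using sum_sum_swap_symmetric[OF sym, where X = UNIV and f = "\<lambda>x y. of_bool (x \<in> D) * w y"]
    by (simp add: distrib_left sum.distrib)
  also have "\<dots> \<le> (\<Sum>x\<in>UNIV. \<Sum>y\<in>UNIV. A x y * sin (\<theta>$x - \<theta>$y) * (s$x - s$y))"
    by (intro sum_mono pair)
  also have "\<dots> = 0"
    by (rule stable_state_first_order[OF stable])
  finally have "(\<Sum>x\<in>UNIV. \<Sum>y\<in>UNIV. A x y * (of_bool (x \<in> D) * w y)) \<le> 0"
    by simp
  moreover have "(\<Sum>x\<in>UNIV. \<Sum>y\<in>UNIV. A x y * (of_bool (x \<in> D) * w y))
      = sin (\<beta> - \<gamma>) * edges_between A D (- Cset \<theta> \<gamma>) - edges_between A D (Cset \<theta> (pi/2))"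
    unfolding edges_between_eq_sum_of_bool w_def
    by (simp add: algebra_simps sum_subtractf sum_distrib_left)
  ultimately show ?thesis
    by (simp add: D_def)
qed

lemma neg_cos_le_indicators:
  fixes y \<gamma> :: real
  assumes "0 \<le> \<gamma>" "\<gamma> \<le> pi/2" "\<bar>y\<bar> \<le> pi"
  shows "- cos y \<le> of_bool (pi/2 \<le> \<bar>y\<bar>) - cos \<gamma> * of_bool (\<bar>y\<bar> < \<gamma>)"
proof (cases "pi/2 \<le> \<bar>y\<bar>")
  case True
  then show ?thesis using assms by simp
next
  case False
  then have "0 \<le> cos y"
    by (intro cos_ge_zero) auto
  moreover have "cos \<gamma> \<le> cos y" if "\<bar>y\<bar> < \<gamma>"
    using cos_monotone_0_pi_le[of "\<bar>y\<bar>" \<gamma>] that assms by simp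
  ultimately show ?thesis
    using False by auto
qed

lemma stable_state_obtuse_estimate:
  fixes A :: "'v::finite \<Rightarrow> 'v \<Rightarrow> real"
  assumes stable: "stable_state A \<theta>" and sym: "\<And>u w. A u w = A w u" and loopless: "\<And>u. A u u = 0"
    and nonneg: "\<And>u w. 0 \<le> A u w" and range: "\<And>v. \<bar>\<theta>$v\<bar> \<le> pi" and "0 \<le> \<gamma>" "\<gamma> \<le> pi/2"
  shows "cos \<gamma> * edges_between A (Cset \<theta> (pi/2)) (- Cset \<theta> \<gamma>)
           \<le> edges_between A (Cset \<theta> (pi/2)) (Cset \<theta> (pi/2))"
proof -
  define Q G where "Q = Cset \<theta> (pi/2)" and "G = - Cset \<theta> \<gamma>"
  have "0 \<le> (\<Sum>x\<in>Q. \<Sum>y\<in>UNIV. A x y * (- cos (\<theta>$y)))"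
  proof (rule sum_nonneg)
    fix x
    assume "x \<in> Q"
    then have "cos (\<theta>$x) \<le> 0"
      using cos_monotone_0_pi_le[of "pi/2" "\<bar>\<theta>$x\<bar>"] range[of x] by (simp add: Q_def)
    then show "0 \<le> (\<Sum>y\<in>UNIV. A x y * (- cos (\<theta>$y)))"
      using stable_state_neighbour_cos_sum_nonpos[OF stable sym loopless] by (simp add: sum_negf)
  qed
  also have "\<dots> \<le> (\<Sum>x\<in>Q. \<Sum>y\<in>UNIV. A x y * (of_bool (y \<in> Q) - cos \<gamma> * of_bool (y \<in> G)))"
    using neg_cos_le_indicators[of \<gamma>] range assms(6,7)
    by (intro sum_mono mult_left_mono nonneg) (simp add: Q_def G_def not_le)
  also have "\<dots> = edges_between A Q Q - cos \<gamma> * edges_between A Q G"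
    by (simp add: edges_between_def right_diff_distrib sum_subtractf sum_distrib_left
        mult.assoc[symmetric] mult.commute[of _ "cos \<gamma>"])
  finally show ?thesis
    by (simp add: Q_def G_def)
qed

lemma is_graph_adjD:
  assumes "is_graph_adj A"
  shows "A u w = A w u" and "A u u = 0" and "0 \<le> A u w"
  using assms unfolding is_graph_adj_def by (metis order.refl zero_le_one)+

lemma stable_state_edges_estimate:
  fixes A :: "'v::finite \<Rightarrow> 'v \<Rightarrow> real"
  assumes stable: "stable_state A \<theta>" and sym: "\<And>u w. A u w = A w u" and loopless: "\<And>u. A u u = 0"
    and nonneg: "\<And>u w. 0 \<le> A u w" and range: "\<And>v. \<bar>\<theta>$v\<bar> \<le> pi"
    and "0 < \<gamma>" "\<gamma> < \<beta>" "\<beta> \<le> pi/2"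
  shows "sin (\<beta> - \<gamma>) * edges_between A (Cset \<theta> \<beta>) (- Cset \<theta> \<gamma>)
           \<le> edges_between A (Cset \<theta> (pi/2)) (Cset \<theta> \<beta>)"
proof -
  define Cb Q G where "Cb = Cset \<theta> \<beta>" and "Q = Cset \<theta> (pi/2)" and "G = - Cset \<theta> \<gamma>"
  have "Q \<subseteq> Cb"
    using assms(8) by (auto simp: Cb_def Q_def)
  then have Cb_split: "(Cb - Q) \<union> Q = Cb" and disjoint: "(Cb - Q) \<inter> Q = {}"
    by auto
  have "sin (\<beta> - \<gamma>) \<le> cos \<gamma>"
    using sin_monotone_2pi_le[of "\<beta> - \<gamma>" "pi/2 - \<gamma>"] assms(6-8) by (simp add: sin_cos_eq)
  then have "sin (\<beta> - \<gamma>) * edges_between A Q G \<le> cos \<gamma> * edges_between A Q G"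
    using edges_between_nonneg[OF nonneg] by (rule mult_right_mono)
  also have "\<dots> \<le> edges_between A Q Q"
    using stable_state_obtuse_estimate[OF stable sym loopless nonneg range, of \<gamma>] assms(6-8)
    by (simp add: Q_def G_def)
  finally have obtuse: "sin (\<beta> - \<gamma>) * edges_between A Q G \<le> edges_between A Q Q" .
  have band: "sin (\<beta> - \<gamma>) * edges_between A (Cb - Q) G \<le> edges_between A (Cb - Q) Q"
    using stable_state_band_estimate[OF stable sym nonneg range assms(6-8)]
    by (simp add: Cb_def Q_def G_def)
  have "sin (\<beta> - \<gamma>) * edges_between A Cb G
          = sin (\<beta> - \<gamma>) * edges_between A (Cb - Q) G + sin (\<beta> - \<gamma>) * edges_between A Q G"
    using edges_between_Un_left[OF disjoint, unfolded Cb_split] by (simp add: distrib_left)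
  also have "\<dots> \<le> edges_between A (Cb - Q) Q + edges_between A Q Q"
    using band obtuse by (rule add_mono)
  also have "\<dots> = edges_between A Q Cb"
    using edges_between_Un_right[OF disjoint, unfolded Cb_split]
      edges_between_commute[OF sym, where X = "Cb - Q" and Y = Q]
    by simp
  finally show ?thesis
    by (simp add: Cb_def Q_def G_def)
qed

theorem lemma2p9:
  fixes A :: "'v::finite \<Rightarrow> 'v \<Rightarrow> real" and \<theta> :: "real^'v" and \<beta> \<gamma> :: real
  assumes "is_graph_adj A"
    and "\<forall>v. - pi < \<theta>$v \<and> \<theta>$v \<le> pi"
    and "stable_state A \<theta>"
    and "rho1 \<theta> \<in> complex_of_real ` {0..1}"
    and "0 < \<gamma>" and "\<gamma> < \<beta>" and "\<beta> \<le> pi/2"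
  shows "edges_between A (Cset \<theta> \<beta>) (Cset \<theta> \<beta>) \<ge> edges_between A (Cset \<theta> (pi/2)) (Cset \<theta> \<beta>)
       \<and> edges_between A (Cset \<theta> (pi/2)) (Cset \<theta> \<beta>)
           \<ge> sin (\<beta> - \<gamma>) * edges_between A (Cset \<theta> \<beta>) (- Cset \<theta> \<gamma>)"
proof
  note graph = is_graph_adjD[OF assms(1)]
  have range: "\<bar>\<theta>$v\<bar> \<le> pi" for v
    using assms(2)[rule_format, of v] by (simp add: abs_le_iff)
  have "Cset \<theta> (pi/2) \<subseteq> Cset \<theta> \<beta>"
    using assms(7) by auto
  with graph(3) show "edges_between A (Cset \<theta> (pi/2)) (Cset \<theta> \<beta>)
                        \<le> edges_between A (Cset \<theta> \<beta>) (Cset \<theta> \<beta>)"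
    by (rule edges_between_mono_left)
  show "sin (\<beta> - \<gamma>) * edges_between A (Cset \<theta> \<beta>) (- Cset \<theta> \<gamma>)
          \<le> edges_between A (Cset \<theta> (pi/2)) (Cset \<theta> \<beta>)"
    using stable_state_edges_estimate[OF assms(3) graph range assms(5-7)] .
qed

end
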